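(* Let $k$ be a positive integer. Among all real numbers $1\ge a_1\ge\dots\ge a_k\ge0$ with $\sum_{i=1}^k a_i=1$, the value of \[\frac{1}{\prod_{i=1}^k(1-a_i)^{1-a_i}\,a_i^{2a_i}}\] (with the convention $0^0=1$) is maximized when $a_i=\frac1k$ for all $i$. *)

theory Defs
  imports "HOL-Analysis.Analysis"
begin

definition pow00 :: "real \<Rightarrow> real \<Rightarrow> real" where
  "pow00 x y = (if x = 0 then (if y = 0 then 1 else 0) else x powr y)"

definition Fval :: "nat \<Rightarrow> (nat \<Rightarrow> real) \<Rightarrow> real" where
  "Fval k a = 1 / (\<Prod>i=1..k. pow00 (1 - a i) (1 - a i) * pow00 (a i) (2 * a i))"

end

theory Submission
  imports Defs
begin

text \<open>Taking logarithms, the denominator of \<open>Fval k a\<close> is \<open>exp (\<Sum>i. \<phi> (a i))\<close> with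
  \<open>\<phi> x = (1 - x) ln (1 - x) + 2 x ln x\<close> (\<open>log_factor\<close> below), a convex function on \<open>[0, 1]\<close>.
  Every tangent line of \<open>\<phi>\<close> lies below it, and summing the tangent line at the mean \<open>1 / k\<close>
  over all \<open>a i\<close> gives \<open>\<Sum>i. \<phi> (a i) \<ge> k \<phi> (1 / k)\<close>, because the linear terms cancel when
  \<open>\<Sum>i. a i = 1\<close>.\<close>

definition xlnx :: "real \<Rightarrow> real" where
  "xlnx x = x * ln x"

lemma xlnx_tangent_le:
  assumes "0 \<le> x" "0 < c"
  shows "xlnx c + (ln c + 1) * (x - c) \<le> xlnx x"
proof (cases "x = 0")
  case True
  then show ?thesis using assms by (simp add: xlnx_def algebra_simps)
next
  case False
  with assms have "x > 0" by simp
  have "ln c - ln x \<le> c / x - 1"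
    using ln_le_minus_one[of "c / x"] \<open>x > 0\<close> assms by (simp add: ln_div)
  then have "x * (ln c - ln x) \<le> x * (c / x - 1)"
    using \<open>x > 0\<close> by (intro mult_left_mono) auto
  then show ?thesis using \<open>x > 0\<close> by (simp add: xlnx_def algebra_simps)
qed

lemma pow00_mult_self:
  assumes "0 \<le> x"
  shows "pow00 x (r * x) = exp (r * xlnx x)"
  using assms by (auto simp: pow00_def xlnx_def powr_def ac_simps)

definition log_factor :: "real \<Rightarrow> real" where
  "log_factor x = xlnx (1 - x) + 2 * xlnx x"

lemma log_factor_tangent_le:
  assumes "0 \<le> x" "x \<le> 1" "0 < c" "c < 1"
  shows "log_factor c + (2 * ln c - ln (1 - c) + 1) * (x - c) \<le> log_factor x"
proof -
  have "xlnx (1 - c) + (ln (1 - c) + 1) * ((1 - x) - (1 - c)) \<le> xlnx (1 - x)"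
    using assms by (intro xlnx_tangent_le) auto
  moreover have "xlnx c + (ln c + 1) * (x - c) \<le> xlnx x"
    using assms by (intro xlnx_tangent_le) auto
  ultimately show ?thesis by (simp add: log_factor_def algebra_simps)
qed

lemma sum_log_factor_ge_mean:
  fixes a :: "'a \<Rightarrow> real" and c :: real
  assumes "finite A" "\<And>i. i \<in> A \<Longrightarrow> 0 \<le> a i \<and> a i \<le> 1"
    and "0 < c" "c < 1" "(\<Sum>i\<in>A. a i) = card A * c"
  shows "card A * log_factor c \<le> (\<Sum>i\<in>A. log_factor (a i))"
proof -
  define m where "m = 2 * ln c - ln (1 - c) + 1"
  have "(\<Sum>i\<in>A. m * (a i - c)) = m * ((\<Sum>i\<in>A. a i) - card A * c)"
    by (simp add: sum_distrib_left[symmetric] sum_subtractf)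
  then have "(\<Sum>i\<in>A. log_factor c + m * (a i - c)) = card A * log_factor c"
    using assms(5) by (simp add: sum.distrib)
  moreover have "(\<Sum>i\<in>A. log_factor c + m * (a i - c)) \<le> (\<Sum>i\<in>A. log_factor (a i))"
    using assms unfolding m_def by (intro sum_mono log_factor_tangent_le) auto
  ultimately show ?thesis by simp
qed

lemma Fval_eq_exp:
  assumes "\<And>i. 1 \<le> i \<Longrightarrow> i \<le> k \<Longrightarrow> 0 \<le> a i \<and> a i \<le> 1"
  shows "Fval k a = exp (- (\<Sum>i=1..k. log_factor (a i)))"
proof -
  have "(\<Prod>i=1..k. pow00 (1 - a i) (1 - a i) * pow00 (a i) (2 * a i))
      = (\<Prod>i=1..k. exp (log_factor (a i)))"
    using assms pow00_mult_self[of "1 - a _" 1] pow00_mult_self[of "a _" 2]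
    by (intro prod.cong) (auto simp: log_factor_def exp_add)
  also have "\<dots> = exp (\<Sum>i=1..k. log_factor (a i))"
    by (simp add: exp_sum)
  finally show ?thesis by (simp add: Fval_def exp_minus inverse_eq_divide)
qed

theorem lemma3p12:
  fixes k :: nat and a :: "nat \<Rightarrow> real"
  assumes "k \<ge> 1"
    and "\<And>i. 1 \<le> i \<Longrightarrow> i \<le> k \<Longrightarrow> 0 \<le> a i \<and> a i \<le> 1"
    and "\<And>i j. 1 \<le> i \<Longrightarrow> i \<le> j \<Longrightarrow> j \<le> k \<Longrightarrow> a j \<le> a i"
    and "(\<Sum>i=1..k. a i) = 1"
  shows "Fval k a \<le> Fval k (\<lambda>i. 1 / real k)"
proof (cases "k = 1")
  case True
  with assms(4) show ?thesis by (simp add: Fval_def)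
next
  case False
  with assms(1) have "k \<ge> 2" by simp
  have "real k * log_factor (1 / real k) \<le> (\<Sum>i=1..k. log_factor (a i))"
    using sum_log_factor_ge_mean[of "{1..k}" a "1 / real k"] assms(2,4) \<open>k \<ge> 2\<close> by auto
  moreover have "Fval k (\<lambda>i. 1 / real k) = exp (- (real k * log_factor (1 / real k)))"
    using Fval_eq_exp[of k "\<lambda>i. 1 / real k"] \<open>k \<ge> 2\<close> by simp
  ultimately show ?thesis
    using Fval_eq_exp[OF assms(2)] by simp
qed

end
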